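(* Suppose $\mathbf{v}_1(0),\dots,\mathbf{v}_m(0)$ are generated i.i.d. from $N(0,\alpha^2\mathbf{I})$, and that for each $k$, $\|\mathbf{v}_k(t)-\mathbf{v}_k(0)\|_2\le\tilde R_v:=\frac{\sqrt{2\pi}\,\alpha\mu_0}{8n(m/\delta)^{1/d}}$. Then with probability at least $1-\delta$, $\|\mathbf{G}(t)-\mathbf{G}(0)\|_2\le\frac{\mu_0}{4}$.
   Context: Data $\mathbf{x}_1,\dots,\mathbf{x}_n\in\mathbb{R}^d$ with $\|\mathbf{x}_i\|_2\le1$ and $\mathbf{x}_i\ne\beta\mathbf{x}_j$ for $i\ne j$, $\beta\ne0$. The vectors $\mathbf{v}_k(t)$ are the first-layer parameters at time/iteration $t$ of weight-normalized training (gradient flow or gradient descent) of $f(\mathbf{x})=\frac{1}{\sqrt m}\sum_kc_k\sigma(g_k\mathbf{v}_k^\top\mathbf{x}/\|\mathbf{v}_k\|_2)$ on the square loss, started from $\mathbf{v}_k(0)\sim N(0,\alpha^2\mathbf{I})$, $c_k$ uniform on $\{-1,1\}$, $g_k(0)=\|\mathbf{v}_k(0)\|_2/\alpha$; $\sigma(s)=\max\{s,0\}$. $\mathbf{G}_{ij}(t)=\frac1m\sum_k\sigma(\mathbf{v}_k(t)^\top\mathbf{x}_i)\sigma(\mathbf{v}_k(t)^\top\mathbf{x}_j)/\|\mathbf{v}_k(t)\|_2^2$. $\mu_0=\lambda_{\min}(\mathbf{G}^\infty)$ with $\mathbf{G}^\infty_{ij}=\mathbb{E}_{\mathbf{v}\sim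 N(0,\alpha^2\mathbf{I})}\langle\mathbf{x}_i^{\mathbf{v}},\mathbf{x}_j^{\mathbf{v}}\rangle\mathbb{1}\{\mathbf{v}^\top\mathbf{x}_i\ge0\}\mathbb{1}\{\mathbf{v}^\top\mathbf{x}_j\ge0\}$, $\mathbf{x}^{\mathbf{v}}=\mathbf{v}\mathbf{v}^\top\mathbf{x}/\|\mathbf{v}\|_2^2$. *)

theory Defs
  imports "HOL-Probability.Probability"
begin

definition relu :: "real \<Rightarrow> real" where
  "relu s = max s 0"

definition gauss_iso :: "real \<Rightarrow> ('a::euclidean_space) measure" where
  "gauss_iso \<alpha> = density lborel (\<lambda>v. ennreal (\<Prod>b\<in>Basis. normal_density 0 \<alpha> (v \<bullet> b)))"

definition gram_G :: "nat \<Rightarrow> ('n::finite \<Rightarrow> real^'d) \<Rightarrow> (nat \<Rightarrow> real^'d) \<Rightarrow> real^'n^'n" where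
  "gram_G m x V = (\<chi> i j. (1 / real m) *
      (\<Sum>k<m. relu (V k \<bullet> x i) * relu (V k \<bullet> x j) / (norm (V k))\<^sup>2))"

definition proj_dir :: "real^'d \<Rightarrow> real^'d \<Rightarrow> real^'d" where
  "proj_dir v y = ((v \<bullet> y) / (norm v)\<^sup>2) *\<^sub>R v"

definition gram_inf :: "real \<Rightarrow> ('n::finite \<Rightarrow> real^'d) \<Rightarrow> real^'n^'n" where
  "gram_inf \<alpha> x = (\<chi> i j. integral\<^sup>L (gauss_iso \<alpha>)
      (\<lambda>v. (proj_dir v (x i) \<bullet> proj_dir v (x j)) *
           (if v \<bullet> x i \<ge> 0 then 1 else 0) * (if v \<bullet> x j \<ge> 0 then 1 else 0)))"

definition lambda_min :: "real^'n^'n \<Rightarrow> real" where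
  "lambda_min A = Min {c. \<exists>u. u \<noteq> 0 \<and> A *v u = c *\<^sub>R u}"

definition spec_norm :: "real^'n^'m \<Rightarrow> real" where
  "spec_norm A = onorm (\<lambda>u. A *v u)"

end

(*
  With probability at least 1 - \<delta> every initial weight has norm at least
  \<rho> = sqrt (2 pi) \<alpha> / (2 (m/\<delta>)^(1/d)): the Gaussian density is at most
  (sqrt (2 pi) \<alpha>)^-d, so the ball of radius \<rho> has mass at most
  (2 \<rho> / (sqrt (2 pi) \<alpha>))^d = \<delta>/m, and a union bound over the m neurons applies.

  On this event the estimate is deterministic. G(V) is the average of the rank-one
  matrices r r^T with r = (relu (u \<bullet> x_i))_i, u = v/|v|. For unit vectors u, u' with
  \<kappa> = u \<bullet> u' \<ge> 0, the Gram-determinant inequality for (u, u', x_i) survives the ReLU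
  coordinatewise and yields |r - r'| |r + r'| \<le> n sqrt (1 - \<kappa>^2); moreover
  sqrt (1 - \<kappa>^2) \<le> |v' - v| / |v|. As |r r^T - r' r'^T| \<le> |r - r'| |r + r'|, each neuron
  moves G by at most n R_v / \<rho> = \<mu>0 / 4 (when |v' - v| \<ge> |v| the crude bound n suffices).
*)

theory Submission
  imports Defs
begin

(* Nonnegativity of the Gram determinant of a, b, z. *)
lemma gram_det_inner_le:
  fixes a b z :: "'a::real_inner"
  shows "a \<bullet> a * (b \<bullet> z)\<^sup>2 + b \<bullet> b * (a \<bullet> z)\<^sup>2 - 2 * (a \<bullet> b) * (a \<bullet> z) * (b \<bullet> z)
           \<le> (a \<bullet> a * (b \<bullet> b) - (a \<bullet> b)\<^sup>2) * (z \<bullet> z)"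
proof -
  define T where "T = a \<bullet> a * (b \<bullet> z)\<^sup>2 + b \<bullet> b * (a \<bullet> z)\<^sup>2 - 2 * (a \<bullet> b) * (a \<bullet> z) * (b \<bullet> z)"
  define r where "r = (b \<bullet> b * (a \<bullet> z) - (a \<bullet> b) * (b \<bullet> z)) *\<^sub>R a + (a \<bullet> a * (b \<bullet> z) - (a \<bullet> b) * (a \<bullet> z)) *\<^sub>R b"
  have rz: "r \<bullet> z = T"
    unfolding r_def T_def by (simp add: inner_add_left algebra_simps power2_eq_square)
  have rr: "r \<bullet> r = (a \<bullet> a * (b \<bullet> b) - (a \<bullet> b)\<^sup>2) * T"
    unfolding r_def T_def
    by (simp add: inner_add_left inner_add_right inner_commute algebra_simps power2_eq_square)
  have "T * T \<le> T * ((a \<bullet> a * (b \<bullet> b) - (a \<bullet> b)\<^sup>2) * (z \<bullet> z))"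
    using Cauchy_Schwarz_ineq[of r z] unfolding rz rr by (simp add: power2_eq_square mult_ac)
  moreover have "0 \<le> (a \<bullet> a * (b \<bullet> b) - (a \<bullet> b)\<^sup>2) * (z \<bullet> z)"
    using Cauchy_Schwarz_ineq[of a b] by simp
  ultimately show ?thesis
    unfolding T_def[symmetric] by (metis linorder_not_less mult_le_cancel_left_pos order.trans)
qed

lemma norm_outer_diff_le_max:
  fixes a b z :: "'a::real_inner"
  shows "norm ((a \<bullet> z) *\<^sub>R a - (b \<bullet> z) *\<^sub>R b) \<le> max (a \<bullet> a) (b \<bullet> b) * norm z"
proof -
  have dominant: "norm ((a \<bullet> z) *\<^sub>R a - (b \<bullet> z) *\<^sub>R b) \<le> a \<bullet> a * norm z"
    if ba: "b \<bullet> b \<le> a \<bullet> a" for a b :: 'a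
  proof -
    define y where "y = (a \<bullet> z) *\<^sub>R a - (b \<bullet> z) *\<^sub>R b"
    have yy: "y \<bullet> y = a \<bullet> a * (a \<bullet> z)\<^sup>2 + b \<bullet> b * (b \<bullet> z)\<^sup>2 - 2 * (a \<bullet> b) * (a \<bullet> z) * (b \<bullet> z)"
      unfolding y_def
      by (simp add: inner_diff_left inner_diff_right inner_commute[of b a] power2_eq_square algebra_simps)
    have "(a \<bullet> a - b \<bullet> b) * ((a \<bullet> z)\<^sup>2 - (b \<bullet> z)\<^sup>2) \<le> (a \<bullet> a - b \<bullet> b) * (a \<bullet> a * (z \<bullet> z))"
      using ba Cauchy_Schwarz_ineq[of a z] zero_le_power2[of "b \<bullet> z"] by (intro mult_left_mono) linarith+
    moreover have "0 \<le> (a \<bullet> b)\<^sup>2 * (z \<bullet> z)" by simp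
    ultimately have "y \<bullet> y \<le> (a \<bullet> a)\<^sup>2 * (z \<bullet> z)"
      using gram_det_inner_le[of a b z] unfolding yy by (simp add: algebra_simps power2_eq_square)
    then have "(norm y)\<^sup>2 \<le> (a \<bullet> a * norm z)\<^sup>2"
      by (simp add: power2_norm_eq_inner power_mult_distrib)
    then show ?thesis
      unfolding y_def[symmetric] by (rule power2_le_imp_le) simp
  qed
  show ?thesis
  proof (cases "b \<bullet> b \<le> a \<bullet> a")
    case True
    then show ?thesis using dominant[of b a] by simp
  next
    case False
    then show ?thesis using dominant[of a b] by (simp add: norm_minus_commute)
  qed
qed

lemma norm_outer_diff_le:
  fixes a b z :: "'a::real_inner"
  shows "norm ((a \<bullet> z) *\<^sub>R a - (b \<bullet> z) *\<^sub>R b) \<le> norm (a - b) * norm (a + b) * norm z"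
proof -
  let ?y = "(a \<bullet> z) *\<^sub>R a - (b \<bullet> z) *\<^sub>R b"
  have "?y + ?y = ((a + b) \<bullet> z) *\<^sub>R (a - b) + ((a - b) \<bullet> z) *\<^sub>R (a + b)"
    by (simp add: inner_add_left inner_diff_left algebra_simps)
  moreover have "norm (?y + ?y) = 2 * norm ?y"
    by (simp flip: scaleR_2)
  ultimately have "2 * norm ?y \<le> norm (((a + b) \<bullet> z) *\<^sub>R (a - b)) + norm (((a - b) \<bullet> z) *\<^sub>R (a + b))"
    by (metis norm_triangle_ineq)
  also have "\<dots> \<le> norm (a + b) * norm z * norm (a - b) + norm (a - b) * norm z * norm (a + b)"
    unfolding norm_scaleR by (intro add_mono mult_right_mono Cauchy_Schwarz_ineq2) simp_all
  also have "\<dots> = 2 * (norm (a - b) * norm (a + b) * norm z)"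
    by (simp add: algebra_simps)
  finally show ?thesis by simp
qed

lemma norm_diff_mult_norm_add_le:
  fixes a b :: "'a::real_inner"
  assumes "0 \<le> \<kappa>" "\<kappa> \<le> 1" "0 \<le> N"
    and quad: "a \<bullet> a + b \<bullet> b - 2 * \<kappa> * (a \<bullet> b) \<le> N * (1 - \<kappa>\<^sup>2)"
  shows "norm (a - b) * norm (a + b) \<le> N * sqrt (1 - \<kappa>\<^sup>2)"
proof -
  define X where "X = (a - b) \<bullet> (a - b)"
  define Y where "Y = (a + b) \<bullet> (a + b)"
  have "0 \<le> X" "0 \<le> Y" unfolding X_def Y_def by auto
  have sum_le: "(1 + \<kappa>) * X + (1 - \<kappa>) * Y \<le> 2 * N * (1 - \<kappa>\<^sup>2)"
    using quad unfolding X_def Y_def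
    by (simp add: inner_add_left inner_add_right inner_diff_left inner_diff_right inner_commute[of b a] algebra_simps)
  have "X * Y \<le> N\<^sup>2 * (1 - \<kappa>\<^sup>2)"
  proof (cases "\<kappa> = 1")
    case True
    then show ?thesis using sum_le \<open>0 \<le> X\<close> \<open>0 \<le> Y\<close> by simp
  next
    case False
    then have pos: "0 < 1 - \<kappa>\<^sup>2"
      using assms(1,2) by (simp add: abs_square_less_1)
    have "4 * ((1 + \<kappa>) * X) * ((1 - \<kappa>) * Y) \<le> ((1 + \<kappa>) * X + (1 - \<kappa>) * Y)\<^sup>2"
      using zero_le_power2[of "(1 + \<kappa>) * X - (1 - \<kappa>) * Y"] by (simp add: power2_eq_square algebra_simps)
    also have "\<dots> \<le> (2 * N * (1 - \<kappa>\<^sup>2))\<^sup>2"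
      using sum_le assms(1,2) \<open>0 \<le> X\<close> \<open>0 \<le> Y\<close> by (intro power_mono) auto
    finally have "(1 - \<kappa>\<^sup>2) * (X * Y) \<le> (1 - \<kappa>\<^sup>2) * (N\<^sup>2 * (1 - \<kappa>\<^sup>2))"
      by (simp add: power2_eq_square algebra_simps)
    then show ?thesis using pos by simp
  qed
  then have "sqrt (X * Y) \<le> sqrt (N\<^sup>2 * (1 - \<kappa>\<^sup>2))"
    by (rule real_sqrt_le_mono)
  also have "\<dots> = N * sqrt (1 - \<kappa>\<^sup>2)"
    using assms(3) by (simp add: real_sqrt_mult)
  finally show ?thesis
    unfolding X_def Y_def by (simp add: norm_eq_sqrt_inner real_sqrt_mult)
qed

lemma sgn_inner_nonneg_if_close:
  fixes v w :: "'a::real_inner"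
  assumes "norm (w - v) < norm v"
  shows "0 \<le> sgn v \<bullet> sgn w"
proof -
  have "(norm (v - w))\<^sup>2 < (norm v)\<^sup>2"
    using assms by (simp add: norm_minus_commute power_strict_mono)
  then have "0 \<le> (norm v)\<^sup>2 + (norm w)\<^sup>2 - (norm (v - w))\<^sup>2"
    using zero_le_power2[of "norm w"] by linarith
  then have "0 \<le> v \<bullet> w"
    unfolding dot_norm_neg[of v w] by simp
  then show ?thesis by (simp add: sgn_div_norm)
qed

lemma sqrt_one_minus_sgn_inner_sq_le:
  fixes v w :: "'a::real_inner"
  assumes "v \<noteq> 0"
  shows "sqrt (1 - (sgn v \<bullet> sgn w)\<^sup>2) \<le> norm (w - v) / norm v"
proof (cases "w = 0")
  case True
  then show ?thesis using assms by simp
next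
  case False
  define \<kappa> where "\<kappa> = sgn v \<bullet> sgn w"
  have "v \<bullet> w = \<kappa> * norm v * norm w"
    using assms False by (simp add: \<kappa>_def sgn_div_norm field_simps)
  then have "(norm (w - v))\<^sup>2 = (norm w - \<kappa> * norm v)\<^sup>2 + (1 - \<kappa>\<^sup>2) * (norm v)\<^sup>2"
    using dot_norm_neg[of v w] by (simp add: norm_minus_commute power2_eq_square algebra_simps)
  then have "1 - \<kappa>\<^sup>2 \<le> (norm (w - v) / norm v)\<^sup>2"
    using assms by (simp add: power_divide pos_le_divide_eq)
  then show ?thesis
    unfolding \<kappa>_def by (metis real_sqrt_le_mono real_sqrt_abs abs_of_nonneg norm_ge_zero divide_nonneg_nonneg)
qed

lemma relu_mult_nonneg: "0 \<le> c \<Longrightarrow> relu (c * s) = c * relu s"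
  by (simp add: relu_def max_mult_distrib_left)

lemma relu_quadratic_form_le:
  fixes \<kappa> a b :: real
  assumes "0 \<le> \<kappa>" "\<kappa>\<^sup>2 \<le> 1" and "a\<^sup>2 + b\<^sup>2 - 2 * \<kappa> * a * b \<le> 1 - \<kappa>\<^sup>2"
  shows "(relu a)\<^sup>2 + (relu b)\<^sup>2 - 2 * \<kappa> * relu a * relu b \<le> 1 - \<kappa>\<^sup>2"
proof (cases "0 \<le> a \<and> 0 \<le> b \<or> a \<le> 0 \<and> b \<le> 0")
  case True
  then show ?thesis using assms by (auto simp: relu_def)
next
  case False
  then have "\<kappa> * a * b \<le> 0"
    using assms(1) by (metis mult.assoc mult_nonneg_nonpos mult_le_0_iff nle_le)
  then have "a\<^sup>2 \<le> 1 - \<kappa>\<^sup>2" "b\<^sup>2 \<le> 1 - \<kappa>\<^sup>2"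
    using assms(3) zero_le_power2[of a] zero_le_power2[of b] by linarith+
  then show ?thesis using False by (auto simp: relu_def)
qed

definition relu_features :: "('n::finite \<Rightarrow> real^'d) \<Rightarrow> real^'d \<Rightarrow> real^'n" where
  "relu_features x u = (\<chi> i. relu (u \<bullet> x i))"

lemma inner_relu_features_self_le:
  fixes x :: "'n::finite \<Rightarrow> real^'d"
  assumes "\<And>i. norm (x i) \<le> 1" and "norm u \<le> 1"
  shows "relu_features x u \<bullet> relu_features x u \<le> real CARD('n)"
proof -
  have coord: "(relu (u \<bullet> x i))\<^sup>2 \<le> 1" for i
  proof -
    have "\<bar>u \<bullet> x i\<bar> \<le> 1"
      using Cauchy_Schwarz_ineq2[of u "x i"] assms mult_le_one[of "norm u" "norm (x i)"] by simp
    then show ?thesis by (simp add: relu_def abs_le_iff power_le_one)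
  qed
  have "relu_features x u \<bullet> relu_features x u = (\<Sum>i\<in>UNIV. (relu (u \<bullet> x i))\<^sup>2)"
    by (simp add: relu_features_def inner_vec_def power2_eq_square)
  also have "\<dots> \<le> (\<Sum>i\<in>(UNIV::'n set). 1)"
    by (intro sum_mono coord)
  finally show ?thesis by simp
qed

lemma relu_features_quadratic_le:
  fixes x :: "'n::finite \<Rightarrow> real^'d"
  assumes x: "\<And>i. norm (x i) \<le> 1" and u: "norm u = 1" "norm u' = 1" and "0 \<le> u \<bullet> u'"
  defines "a \<equiv> relu_features x u" and "b \<equiv> relu_features x u'"
  shows "a \<bullet> a + b \<bullet> b - 2 * (u \<bullet> u') * (a \<bullet> b) \<le> real CARD('n) * (1 - (u \<bullet> u')\<^sup>2)"
proof -
  define \<kappa> where "\<kappa> = u \<bullet> u'"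
  have \<kappa>_le: "\<kappa>\<^sup>2 \<le> 1"
    using Cauchy_Schwarz_ineq[of u u'] u by (simp add: \<kappa>_def power2_norm_eq_inner[symmetric])
  have coord: "(a $ i)\<^sup>2 + (b $ i)\<^sup>2 - 2 * \<kappa> * a $ i * b $ i \<le> 1 - \<kappa>\<^sup>2" for i
  proof -
    have "(u' \<bullet> x i)\<^sup>2 + (u \<bullet> x i)\<^sup>2 - 2 * \<kappa> * (u \<bullet> x i) * (u' \<bullet> x i) \<le> (1 - \<kappa>\<^sup>2) * (x i \<bullet> x i)"
      using gram_det_inner_le[of u u' "x i"] u by (simp add: \<kappa>_def power2_norm_eq_inner[symmetric])
    also have "\<dots> \<le> 1 - \<kappa>\<^sup>2"
      using x[of i] \<kappa>_le by (intro mult_left_le) (auto simp: power2_norm_eq_inner[symmetric] power_le_one)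
    finally show ?thesis
      unfolding a_def b_def relu_features_def
      using relu_quadratic_form_le[of \<kappa>] \<open>0 \<le> u \<bullet> u'\<close> \<kappa>_le by (simp add: \<kappa>_def add.commute)
  qed
  have "a \<bullet> a + b \<bullet> b - 2 * \<kappa> * (a \<bullet> b) = (\<Sum>i\<in>UNIV. (a $ i)\<^sup>2 + (b $ i)\<^sup>2 - 2 * \<kappa> * a $ i * b $ i)"
    by (simp add: inner_vec_def power2_eq_square sum.distrib sum_subtractf sum_distrib_left mult_ac)
  also have "\<dots> \<le> (\<Sum>i\<in>(UNIV::'n set). 1 - \<kappa>\<^sup>2)"
    by (intro sum_mono coord)
  finally show ?thesis by (simp add: \<kappa>_def)
qed

lemma norm_relu_features_outer_diff_le:
  fixes x :: "'n::finite \<Rightarrow> real^'d" and v w :: "real^'d" and z :: "real^'n"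
  assumes x: "\<And>i. norm (x i) \<le> 1" and "v \<noteq> 0"
  defines "a \<equiv> relu_features x (sgn v)" and "b \<equiv> relu_features x (sgn w)"
  shows "norm ((b \<bullet> z) *\<^sub>R b - (a \<bullet> z) *\<^sub>R a) \<le> real CARD('n) * (norm (w - v) / norm v) * norm z"
proof (cases "norm (w - v) < norm v")
  case True
  then have "w \<noteq> 0" by auto
  define \<kappa> where "\<kappa> = sgn w \<bullet> sgn v"
  have "0 \<le> \<kappa>" "\<kappa> \<le> 1"
    using sgn_inner_nonneg_if_close[OF True] Cauchy_Schwarz_ineq2[of "sgn w" "sgn v"] \<open>v \<noteq> 0\<close> \<open>w \<noteq> 0\<close>
    by (simp_all add: \<kappa>_def inner_commute norm_sgn)
  have "b \<bullet> b + a \<bullet> a - 2 * \<kappa> * (b \<bullet> a) \<le> real CARD('n) * (1 - \<kappa>\<^sup>2)"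
    unfolding a_def b_def \<kappa>_def
    using relu_features_quadratic_le[of x "sgn w" "sgn v", OF x] \<open>0 \<le> \<kappa>\<close> \<open>v \<noteq> 0\<close> \<open>w \<noteq> 0\<close>
    by (simp add: \<kappa>_def norm_sgn)
  then have "norm (b - a) * norm (b + a) \<le> real CARD('n) * sqrt (1 - \<kappa>\<^sup>2)"
    using \<open>0 \<le> \<kappa>\<close> \<open>\<kappa> \<le> 1\<close> by (intro norm_diff_mult_norm_add_le) simp_all
  also have "\<dots> \<le> real CARD('n) * (norm (w - v) / norm v)"
    using sqrt_one_minus_sgn_inner_sq_le[OF \<open>v \<noteq> 0\<close>, of w]
    by (intro mult_left_mono) (simp_all add: \<kappa>_def inner_commute)
  finally show ?thesis
    using norm_outer_diff_le[of b z a] by (meson mult_right_mono norm_ge_zero order_trans)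
next
  case False
  have "norm ((b \<bullet> z) *\<^sub>R b - (a \<bullet> z) *\<^sub>R a) \<le> max (b \<bullet> b) (a \<bullet> a) * norm z"
    by (rule norm_outer_diff_le_max)
  also have "\<dots> \<le> real CARD('n) * norm z"
    unfolding a_def b_def
    using inner_relu_features_self_le[of x "sgn v", OF x] inner_relu_features_self_le[of x "sgn w", OF x]
    by (intro mult_right_mono) (simp_all add: norm_sgn)
  also have "\<dots> \<le> real CARD('n) * (norm (w - v) / norm v) * norm z"
  proof -
    have ratio: "1 \<le> norm (w - v) / norm v"
      using False \<open>v \<noteq> 0\<close> by simp
    show ?thesis
      using mult_right_mono[OF mult_left_mono[OF ratio of_nat_0_le_iff] norm_ge_zero[of z]] by simp
  qed
  finally show ?thesis .
qed

lemma gram_G_mult_vec: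
  fixes x :: "'n::finite \<Rightarrow> real^'d" and V :: "nat \<Rightarrow> real^'d"
  shows "gram_G m x V *v z =
     (1 / real m) *\<^sub>R (\<Sum>k<m. (relu_features x (sgn (V k)) \<bullet> z) *\<^sub>R relu_features x (sgn (V k)))"
proof -
  define r where "r k = relu_features x (sgn (V k))" for k
  \<comment> \<open>For \<open>v = 0\<close> both sides are 0: \<open>gram_G\<close> divides by \<open>norm 0 = 0\<close>, and \<open>sgn 0 = 0\<close>.\<close>
  have entry: "relu (v \<bullet> x i) * relu (v \<bullet> x j) / (norm v)\<^sup>2
      = relu_features x (sgn v) $ i * relu_features x (sgn v) $ j" for v :: "real^'d" and i j
    by (simp add: relu_features_def sgn_div_norm divide_inverse relu_mult_nonneg power2_eq_square)
  have "(gram_G m x V *v z) $ i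
      = (1 / real m) * (\<Sum>k<m. (\<Sum>j\<in>UNIV. r k $ j * z $ j) * r k $ i)" for i
    unfolding r_def
    by (simp add: gram_G_def matrix_vector_mult_def entry sum_distrib_left sum_distrib_right
        sum.swap[of _ UNIV] mult_ac)
  then show ?thesis
    by (simp add: vec_eq_iff inner_vec_def sum_component r_def)
qed

lemma spec_norm_gram_G_diff_le:
  fixes x :: "'n::finite \<Rightarrow> real^'d" and V W :: "nat \<Rightarrow> real^'d"
  assumes x: "\<And>i. norm (x i) \<le> 1" and "0 < m" and "0 < \<rho>"
    and large: "\<And>k. k < m \<Longrightarrow> \<rho> \<le> norm (V k)"
    and close: "\<And>k. k < m \<Longrightarrow> norm (W k - V k) \<le> \<eta>"
  shows "spec_norm (gram_G m x W - gram_G m x V) \<le> real CARD('n) * \<eta> / \<rho>"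
  unfolding spec_norm_def
proof (rule onorm_le)
  fix z :: "real^'n"
  define r where "r U k = relu_features x (sgn (U k))" for U :: "nat \<Rightarrow> real^'d" and k
  define D where "D k = (r W k \<bullet> z) *\<^sub>R r W k - (r V k \<bullet> z) *\<^sub>R r V k" for k
  have Gz: "(gram_G m x W - gram_G m x V) *v z = (1 / real m) *\<^sub>R (\<Sum>k<m. D k)"
    by (simp add: matrix_vector_mult_diff_rdistrib gram_G_mult_vec D_def r_def
        sum_subtractf scaleR_diff_right)
  have bound: "norm (D k) \<le> real CARD('n) * \<eta> / \<rho> * norm z" if "k < m" for k
  proof -
    have "V k \<noteq> 0" using large[OF that] \<open>0 < \<rho>\<close> by auto
    have "norm (D k) \<le> real CARD('n) * (norm (W k - V k) / norm (V k)) * norm z"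
      unfolding D_def r_def by (rule norm_relu_features_outer_diff_le[OF x \<open>V k \<noteq> 0\<close>])
    also have "\<dots> \<le> real CARD('n) * (\<eta> / \<rho>) * norm z"
      using close[OF that] large[OF that] \<open>0 < \<rho>\<close> order_trans[OF norm_ge_zero close[OF that]]
      by (intro mult_right_mono mult_left_mono frac_le) auto
    finally show ?thesis by simp
  qed
  have "norm (\<Sum>k<m. D k) \<le> (\<Sum>k<m. norm (D k))"
    by (rule norm_sum)
  also have "\<dots> \<le> (\<Sum>k<m. real CARD('n) * \<eta> / \<rho> * norm z)"
    using bound by (intro sum_mono) simp
  finally have "norm (\<Sum>k<m. D k) \<le> real m * (real CARD('n) * \<eta> / \<rho> * norm z)"
    by simp
  then have "norm (\<Sum>k<m. D k) / real m \<le> real CARD('n) * \<eta> / \<rho> * norm z"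
    using \<open>0 < m\<close> by (simp add: pos_divide_le_eq mult.commute)
  then show "norm ((gram_G m x W - gram_G m x V) *v z) \<le> real CARD('n) * \<eta> / \<rho> * norm z"
    unfolding Gz by simp
qed

lemma nn_integral_normal_density: "0 < \<sigma> \<Longrightarrow> (\<integral>\<^sup>+y. ennreal (normal_density \<mu> \<sigma> y) \<partial>lborel) = 1"
  using prob_space.emeasure_space_1[OF prob_space_normal_density, of \<sigma> \<mu>]
  by (simp add: emeasure_density)

lemma prob_space_gauss_iso:
  assumes "0 < \<alpha>"
  shows "prob_space (gauss_iso \<alpha> :: 'a::euclidean_space measure)"
proof
  have "emeasure (gauss_iso \<alpha> :: 'a measure) (space (gauss_iso \<alpha>))
      = (\<integral>\<^sup>+v. (\<Prod>b\<in>Basis. ennreal (normal_density 0 \<alpha> ((v::'a) \<bullet> b))) \<partial>lborel)"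
    by (simp add: gauss_iso_def emeasure_density flip: prod_ennreal)
  also have "\<dots> = (\<Prod>b\<in>(Basis::'a set). \<integral>\<^sup>+y. ennreal (normal_density 0 \<alpha> y) \<partial>lborel)"
    by (rule nn_integral_lborel_prod) auto
  finally show "emeasure (gauss_iso \<alpha> :: 'a measure) (space (gauss_iso \<alpha>)) = 1"
    using assms by (simp add: nn_integral_normal_density)
qed

lemma normal_density_le: "0 < \<sigma> \<Longrightarrow> normal_density \<mu> \<sigma> y \<le> 1 / (sqrt (2 * pi) * \<sigma>)"
  by (simp add: normal_density_def real_sqrt_mult divide_right_mono)

lemma emeasure_gauss_iso_le:
  assumes "0 < \<alpha>" and "A \<in> sets borel"
  shows "emeasure (gauss_iso \<alpha>) A
           \<le> ennreal ((1 / (sqrt (2 * pi) * \<alpha>)) ^ DIM('a)) * emeasure lborel (A :: 'a::euclidean_space set)"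
proof -
  have "(\<Prod>b\<in>Basis. normal_density 0 \<alpha> (v \<bullet> b)) \<le> (1 / (sqrt (2 * pi) * \<alpha>)) ^ DIM('a)" for v :: 'a
    using prod_mono[of Basis "\<lambda>b. normal_density 0 \<alpha> (v \<bullet> b)" "\<lambda>_. 1 / (sqrt (2 * pi) * \<alpha>)"]
      normal_density_le[OF assms(1)]
    by simp
  then have "emeasure (gauss_iso \<alpha>) A
      \<le> (\<integral>\<^sup>+v. ennreal ((1 / (sqrt (2 * pi) * \<alpha>)) ^ DIM('a)) * indicator A v \<partial>lborel)"
    unfolding gauss_iso_def using assms(2)
    by (auto simp: emeasure_density intro!: nn_integral_mono ennreal_leI split: split_indicator)
  also have "\<dots> = ennreal ((1 / (sqrt (2 * pi) * \<alpha>)) ^ DIM('a)) * emeasure lborel A"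
    using assms(2) by (simp add: nn_integral_cmult_indicator)
  finally show ?thesis .
qed

lemma emeasure_lborel_norm_less_le:
  assumes "0 < \<rho>"
  shows "emeasure lborel {v :: 'a::euclidean_space. norm v < \<rho>} \<le> ennreal ((2 * \<rho>) ^ DIM('a))"
proof -
  have "{v :: 'a. norm v < \<rho>} \<subseteq> cbox (- \<rho> *\<^sub>R One) (\<rho> *\<^sub>R One)"
  proof
    fix v :: 'a
    assume "v \<in> {v. norm v < \<rho>}"
    then have "\<bar>v \<bullet> b\<bar> \<le> \<rho>" if "b \<in> Basis" for b
      using Basis_le_norm[OF that, of v] by simp
    then show "v \<in> cbox (- \<rho> *\<^sub>R One) (\<rho> *\<^sub>R One)"
      by (auto simp: mem_box inner_sum_left inner_Basis abs_le_iff minus_le_iff)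
  qed
  then have "emeasure lborel {v :: 'a. norm v < \<rho>} \<le> emeasure lborel (cbox (- \<rho> *\<^sub>R One) (\<rho> *\<^sub>R One) :: 'a set)"
    by (intro emeasure_mono) auto
  also have "\<dots> = ennreal ((2 * \<rho>) ^ DIM('a))"
    using assms by (simp add: emeasure_lborel_cbox_eq inner_add_left inner_sum_left inner_Basis
        power_mult_distrib cong: prod.cong)
  finally show ?thesis .
qed

lemma measure_gauss_iso_norm_less_le:
  assumes "0 < \<alpha>" "0 < \<rho>"
  shows "measure (gauss_iso \<alpha>) {v :: 'a::euclidean_space. norm v < \<rho>}
           \<le> (2 * \<rho> / (sqrt (2 * pi) * \<alpha>)) ^ DIM('a)"
proof -
  let ?c = "ennreal ((1 / (sqrt (2 * pi) * \<alpha>)) ^ DIM('a))"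
  have "emeasure (gauss_iso \<alpha>) {v :: 'a. norm v < \<rho>} \<le> ?c * emeasure lborel {v :: 'a. norm v < \<rho>}"
    using assms(1) by (rule emeasure_gauss_iso_le) simp
  also have "\<dots> \<le> ?c * ennreal ((2 * \<rho>) ^ DIM('a))"
    using assms(2) by (intro mult_left_mono emeasure_lborel_norm_less_le) simp_all
  also have "\<dots> = ennreal ((1 / (sqrt (2 * pi) * \<alpha>) * (2 * \<rho>)) ^ DIM('a))"
    unfolding power_mult_distrib using assms by (intro ennreal_mult[symmetric]) simp_all
  finally show ?thesis
    unfolding measure_def using assms by (intro enn2real_leI) simp_all
qed

lemma measure_PiM_forall_notin_ge:
  assumes "prob_space M" "finite I" "B \<in> sets M"
  defines "A \<equiv> {V \<in> space (PiM I (\<lambda>_. M)). \<forall>i\<in>I. V i \<notin> B}"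
  shows "A \<in> sets (PiM I (\<lambda>_. M))"
    and "1 - real (card I) * measure M B \<le> measure (PiM I (\<lambda>_. M)) A"
proof -
  interpret product_prob_space "\<lambda>_. M" I
    using assms(1) by (simp add: product_prob_space_def product_prob_space_axioms_def
        product_sigma_finite_def prob_space_imp_sigma_finite)
  define E where "E i = {V \<in> space (PiM I (\<lambda>_. M)). V i \<in> B}" for i
  have E: "E i \<in> sets (PiM I (\<lambda>_. M))" "prob (E i) = measure M B" if "i \<in> I" for i
    using measurable_sets[OF measurable_component_singleton[OF that] assms(3)]
      emeasure_PiM_Collect_single[OF that assms(3)]
    by (simp_all add: E_def vimage_def Int_def conj_commute measure_def)
  have A_eq: "A = space (PiM I (\<lambda>_. M)) - (\<Union>i\<in>I. E i)"
    by (auto simp: A_def E_def)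
  show "A \<in> sets (PiM I (\<lambda>_. M))"
    unfolding A_eq using E assms(2) by auto
  have "prob (\<Union>i\<in>I. E i) \<le> (\<Sum>i\<in>I. prob (E i))"
    using E assms(2) by (intro finite_measure_subadditive_finite) auto
  also have "\<dots> = real (card I) * measure M B"
    using E by simp
  finally show "1 - real (card I) * measure M B \<le> prob A"
    unfolding A_eq using E assms(2) by (subst prob_compl) auto
qed

lemma measure_PiM_gauss_iso_norms_ge:
  fixes m :: nat
  assumes "0 < \<alpha>" "0 < \<rho>"
  defines "A \<equiv> {V \<in> space (PiM {..<m} (\<lambda>_. gauss_iso \<alpha>)). \<forall>k<m. \<rho> \<le> norm (V k :: 'a::euclidean_space)}"
  shows "A \<in> sets (PiM {..<m} (\<lambda>_. gauss_iso \<alpha>))"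
    and "1 - real m * (2 * \<rho> / (sqrt (2 * pi) * \<alpha>)) ^ DIM('a) \<le> measure (PiM {..<m} (\<lambda>_. gauss_iso \<alpha>)) A"
proof -
  have ball: "{v :: 'a. norm v < \<rho>} \<in> sets (gauss_iso \<alpha>)"
    by (simp add: gauss_iso_def)
  have A_eq: "A = {V \<in> space (PiM {..<m} (\<lambda>_. gauss_iso \<alpha>)). \<forall>k\<in>{..<m}. V k \<notin> {v. norm v < \<rho>}}"
    by (auto simp: A_def not_less)
  note union_bound = measure_PiM_forall_notin_ge[OF prob_space_gauss_iso[OF assms(1)] finite_lessThan ball]
  show "A \<in> sets (PiM {..<m} (\<lambda>_. gauss_iso \<alpha>))"
    unfolding A_eq by (rule union_bound(1))
  show "1 - real m * (2 * \<rho> / (sqrt (2 * pi) * \<alpha>)) ^ DIM('a) \<le> measure (PiM {..<m} (\<lambda>_. gauss_iso \<alpha>)) A"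
  proof -
    have "real m * measure (gauss_iso \<alpha>) {v :: 'a. norm v < \<rho>} \<le> real m * (2 * \<rho> / (sqrt (2 * pi) * \<alpha>)) ^ DIM('a)"
      using assms(1,2) by (intro mult_left_mono measure_gauss_iso_norm_less_le) simp_all
    then show ?thesis
      using union_bound(2)[of m] unfolding A_eq by simp
  qed
qed

theorem lemmaB5:
  fixes x :: "'n::finite \<Rightarrow> real^'d"
    and m :: nat and \<alpha> \<delta> :: real
  assumes x_norm: "\<And>i. norm (x i) \<le> 1"
    and x_nonpar: "\<And>i j \<beta>. i \<noteq> j \<Longrightarrow> \<beta> \<noteq> 0 \<Longrightarrow> x i \<noteq> \<beta> *\<^sub>R x j"
    and m_pos: "m > 0"
    and alpha_pos: "\<alpha> > 0"
    and delta: "0 < \<delta>" "\<delta> < 1"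
  shows "\<exists>A \<in> sets (PiM {..<m} (\<lambda>_. gauss_iso \<alpha>)).
           measure (PiM {..<m} (\<lambda>_. gauss_iso \<alpha>)) A \<ge> 1 - \<delta> \<and>
           (\<forall>V0 \<in> A. \<forall>Vt :: nat \<Rightarrow> real^'d.
              (\<forall>k<m. norm (Vt k - V0 k) \<le>
                  sqrt (2 * pi) * \<alpha> * lambda_min (gram_inf \<alpha> x) /
                  (8 * real CARD('n) * (real m / \<delta>) powr (1 / real CARD('d))))
              \<longrightarrow> spec_norm (gram_G m x Vt - gram_G m x V0) \<le> lambda_min (gram_inf \<alpha> x) / 4)"
proof -
  \<comment> \<open>\<open>x_nonpar\<close> only serves to make \<open>\<mu>\<^sub>0\<close> positive; the estimate holds without it.\<close>
  define \<mu> where "\<mu> = lambda_min (gram_inf \<alpha> x)"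
  define T where "T = (real m / \<delta>) powr (1 / real CARD('d))"
  define \<rho> where "\<rho> = sqrt (2 * pi) * \<alpha> / (2 * T)"
  have "0 < T" "0 < \<rho>"
    using m_pos delta alpha_pos by (simp_all add: T_def \<rho>_def)
  have "T ^ CARD('d) = real m / \<delta>"
    using m_pos delta by (simp add: T_def powr_realpow[symmetric] powr_powr)
  then have "real m * (2 * \<rho> / (sqrt (2 * pi) * \<alpha>)) ^ CARD('d) = \<delta>"
    using \<open>0 < T\<close> alpha_pos m_pos by (simp add: \<rho>_def power_one_over)
  define A where "A = {V \<in> space (PiM {..<m} (\<lambda>_. gauss_iso \<alpha>)). \<forall>k<m. \<rho> \<le> norm (V k :: real^'d)}"
  note event = measure_PiM_gauss_iso_norms_ge[OF alpha_pos \<open>0 < \<rho>\<close>, where m=m and 'a="real^'d", folded A_def]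
  have "1 - \<delta> \<le> measure (PiM {..<m} (\<lambda>_. gauss_iso \<alpha>)) A"
    using event(2) \<open>real m * _ = \<delta>\<close> by simp
  moreover have "spec_norm (gram_G m x W - gram_G m x V) \<le> \<mu> / 4"
    if "V \<in> A" and "\<forall>k<m. norm (W k - V k) \<le> sqrt (2 * pi) * \<alpha> * \<mu> / (8 * real CARD('n) * T)" for V W
  proof -
    have "sqrt (2 * pi) * \<alpha> * \<mu> / (8 * real CARD('n) * T) = \<mu> * \<rho> / (4 * real CARD('n))"
      by (simp add: \<rho>_def mult_ac)
    then have "spec_norm (gram_G m x W - gram_G m x V) \<le> real CARD('n) * (\<mu> * \<rho> / (4 * real CARD('n))) / \<rho>"
      using that m_pos \<open>0 < \<rho>\<close> by (intro spec_norm_gram_G_diff_le[OF x_norm]) (auto simp: A_def)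
    then show ?thesis
      using \<open>0 < \<rho>\<close> by simp
  qed
  ultimately show ?thesis
    using event(1) unfolding \<mu>_def T_def by blast
qed

end
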